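(* Let $n\ge2$ and let $\mathfrak{g}$ be of type $C_{n-1}$. Then \[ \widetilde{\operatorname{ps}}(\omega_{n-1})=q^{\binom{n}{2}}\operatorname{ps}(\omega_{n-1})=\operatorname{Cat}_n(q). \]
   Context: For type $C_{n-1}$, $\omega_{n-1}=\epsilon_1+\cdots+\epsilon_{n-1}$ and $\operatorname{ch}V(\omega_{n-1})$ is a Laurent polynomial in $x_1,\dots,x_{n-1}$. The principal specialization $\operatorname{ps}(\lambda)$ is $\operatorname{ch}V(\lambda)$ evaluated at $x_i=q^i$ ($1\le i\le n-1$). The normalized principal specialization is $\widetilde{\operatorname{ps}}(\lambda)=q^{-\eta}\operatorname{ps}(\lambda)$ where $\eta$ is the lowest power of $q$ occurring in $\operatorname{ps}(\lambda)$. $\operatorname{Cat}_n(q)=\frac{1}{[n+1]_q}\begin{bmatrix}2n\\ n\end{bmatrix}_q$ is the Mahonian $q$-Catalan number, where $[k]_q=1+q+\cdots+q^{k-1}$ and $\begin{bmatrix}a\\ b\end{bmatrix}_q$ is the Gaussian binomial coefficient. *)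

theory Defs
  imports "HOL-Computational_Algebra.Formal_Laurent_Series" "HOL-Combinatorics.Permutations"
begin

text \<open>Laurent polynomials in q are modelled as formal Laurent series over the rationals;
  q is fls_X and q^k for integer k is fls_X_intpow k.\<close>

type_synonym lp = "rat fls"

definition detm :: "nat \<Rightarrow> (nat \<Rightarrow> nat \<Rightarrow> 'a::comm_ring_1) \<Rightarrow> 'a" where
  "detm m M = (\<Sum>p | p permutes {1..m}. of_int (sign p) * (\<Prod>i=1..m. M i (p i)))"

text \<open>A weight mu = sum mu_i eps_i is a function nat => int (i = 1..m).
  rho_C m has coordinates rho_i = m - i + 1.  The Weyl alternant of type C_m is
  A_mu(x) = det (x_j^{mu_i} - x_j^{-mu_i}); its principal specialization x_j = q^j is: \<close>
definition altC_ps :: "nat \<Rightarrow> (nat \<Rightarrow> int) \<Rightarrow> lp" where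
  "altC_ps m mu = detm m (\<lambda>i j. fls_X_intpow (int j * mu i) - fls_X_intpow (- (int j * mu i)))"

definition rhoC :: "nat \<Rightarrow> nat \<Rightarrow> int" where
  "rhoC m i = int m - int i + 1"

text \<open>Principal specialization of ch V(lambda) for type C_m, via the Weyl character formula
  ch V(lambda) = A_{lambda+rho} / A_rho (specialization is a ring map and A_rho specializes
  to a nonzero Laurent polynomial).\<close>
definition psC :: "nat \<Rightarrow> (nat \<Rightarrow> int) \<Rightarrow> lp" where
  "psC m lam = altC_ps m (\<lambda>i. lam i + rhoC m i) / altC_ps m (rhoC m)"

definition npsC :: "nat \<Rightarrow> (nat \<Rightarrow> int) \<Rightarrow> lp" where
  "npsC m lam = fls_shift (fls_subdegree (psC m lam)) (psC m lam)"

definition omegaC :: "nat \<Rightarrow> nat \<Rightarrow> int" where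
  "omegaC m i = (if 1 \<le> i \<and> i \<le> m then 1 else 0)"

definition qint :: "nat \<Rightarrow> lp" where
  "qint k = (\<Sum>i<k. fls_X ^ i)"

definition qfact :: "nat \<Rightarrow> lp" where
  "qfact k = (\<Prod>i=1..k. qint i)"

definition qbinom :: "nat \<Rightarrow> nat \<Rightarrow> lp" where
  "qbinom a b = qfact a / (qfact b * qfact (a - b))"

definition qCat :: "nat \<Rightarrow> lp" where
  "qCat n = qbinom (2 * n) n / qint (n + 1)"

end

theory Submission
  imports Defs "Jordan_Normal_Form.Determinant"
begin

text \<open>The principal specialization of the type C alternant A_mu has entries z_i^j - z_i^(-j)
  with z_i = q^(mu_i). Since z^(j+1) - z^(-j-1) = (z - z^(-1)) U_j(z + z^(-1)) with U_j monic of
  degree j, the determinant is the product of the z_i - z_i^(-1) times the Vandermonde determinant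
  of the z_i + z_i^(-1). Hence A_rho and A_(omega+rho) are explicit products of q-integers; grouped
  by rows, the row b factors of A_(omega+rho) and A_rho have ratio Cat_(b+2)(q) / (q^(b+1) Cat_(b+1)(q)),
  and the product over b telescopes to q^(-binom n 2) Cat_n(q). As Cat_n(q) has nonzero constant
  term, binom n 2 is also the normalizing shift.\<close>

lemma prod_lessThan_reflect: "(\<Prod>i<m. f (m - i)) = (\<Prod>b<m. f (Suc b))"
proof -
  have "(\<Prod>i<m. f (m - i)) = (\<Prod>i<m. (\<lambda>b. f (Suc b)) (m - Suc i))"
    by (intro prod.cong) (auto simp: Suc_diff_Suc)
  also have "\<dots> = (\<Prod>b<m. f (Suc b))"
    by (rule prod.nat_diff_reindex)
  finally show ?thesis .
qed

lemma prod_lessThan_triangle_reflect: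
  "(\<Prod>i<m. \<Prod>k<i. h (m - i) (m - k)) = (\<Prod>b<m. \<Prod>a<b. h (Suc a) (Suc b))"
proof -
  have "(\<Prod>i<m. \<Prod>k<i. h (m - i) (m - k))
      = (\<Prod>(i,k) \<in> (SIGMA i:{..<m}. {..<i}). h (m - i) (m - k))"
    by (rule prod.Sigma) auto
  also have "\<dots> = (\<Prod>(b,a) \<in> (SIGMA b:{..<m}. {..<b}). h (Suc a) (Suc b))"
    by (rule prod.reindex_bij_witness[where i = "\<lambda>(i,k). (m - 1 - k, m - 1 - i)"
          and j = "\<lambda>(i,k). (m - 1 - k, m - 1 - i)"])
      (auto simp: Suc_diff_Suc)
  also have "\<dots> = (\<Prod>b<m. \<Prod>a<b. h (Suc a) (Suc b))"
    by (rule prod.Sigma[symmetric]) auto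
  finally show ?thesis .
qed

lemma prod_power_Suc_eq_power_choose_2:
  "(\<Prod>b<m. x ^ Suc b) = (x :: 'a::comm_monoid_mult) ^ (Suc m choose 2)"
proof (induction m)
  case (Suc m)
  have "Suc (Suc m) choose 2 = (Suc m choose 2) + Suc m"
    by (simp add: numeral_2_eq_2)
  with Suc show ?case
    by (simp add: power_add mult_ac)
qed (simp add: numeral_2_eq_2)

lemma power_minus_inverse_eq:
  fixes x :: "'a::field"
  assumes "x \<noteq> 0"
  shows "x ^ a - inverse (x ^ a) = (x ^ (2 * a) - 1) / x ^ a"
  using assms by (simp add: field_simps mult_2 mult_2_right power_add)

lemma power_plus_inverse_diff_eq:
  fixes x :: "'a::field"
  assumes "x \<noteq> 0"
  shows "(x ^ a + inverse (x ^ a)) - (x ^ (a + d) + inverse (x ^ (a + d)))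
    = - ((x ^ d - 1) * (x ^ (a + (a + d)) - 1)) / x ^ (a + d)"
  using assms by (simp add: field_simps power_add)

lemma det_mat_scale_rows:
  fixes c :: "nat \<Rightarrow> 'a::comm_ring_1"
  shows "det (mat n n (\<lambda>(i,j). c i * f i j)) = (\<Prod>i<n. c i) * det (mat n n (\<lambda>(i,j). f i j))"
proof -
  have "det (mat n n (\<lambda>(i,j). c i * f i j))
      = (\<Sum>p | p permutes {..<n}. signof p * (\<Prod>i<n. c i * f i (p i)))"
    by (subst det_def'[of _ n]) (auto simp: atLeast0LessThan intro!: sum.cong prod.cong permutes_in_image)
  also have "\<dots> = (\<Sum>p | p permutes {..<n}. (\<Prod>i<n. c i) * (signof p * (\<Prod>i<n. f i (p i))))"
    by (simp add: prod.distrib mult_ac)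
  also have "\<dots> = (\<Prod>i<n. c i) * det (mat n n (\<lambda>(i,j). f i j))"
    by (subst det_def'[of _ n])
      (auto simp: atLeast0LessThan sum_distrib_left intro!: sum.cong prod.cong permutes_in_image)
  finally show ?thesis .
qed

lemma det_mat_poly_monic:
  fixes p :: "nat \<Rightarrow> 'a::comm_ring_1 poly"
  assumes deg: "\<And>j. j < n \<Longrightarrow> degree (p j) \<le> j"
    and monic: "\<And>j. j < n \<Longrightarrow> coeff (p j) j = 1"
  shows "det (mat n n (\<lambda>(i,j). poly (p j) (t i))) = det (mat n n (\<lambda>(i,j). t i ^ j))"
proof -
  define V where "V = mat n n (\<lambda>(i,j). t i ^ j)"
  define T where "T = mat n n (\<lambda>(k,j). coeff (p j) k)"
  have V: "V \<in> carrier_mat n n" and T: "T \<in> carrier_mat n n"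
    by (simp_all add: V_def T_def)
  have "upper_triangular T"
    by (auto simp: upper_triangular_def T_def intro!: coeff_eq_0 le_less_trans[OF deg])
  then have "det T = 1"
    using det_upper_triangular[OF _ T] monic by (simp add: prod_list_diag_prod T_def)
  moreover have "mat n n (\<lambda>(i,j). poly (p j) (t i)) = V * T"
  proof (rule eq_matI)
    fix i j assume "i < dim_row (V * T)" "j < dim_col (V * T)"
    then have ij: "i < n" "j < n"
      using V T by auto
    have "poly (p j) (t i) = (\<Sum>k\<le>degree (p j). coeff (p j) k * t i ^ k)"
      by (rule poly_altdef)
    also have "\<dots> = (\<Sum>k<n. coeff (p j) k * t i ^ k)"
      using deg[OF ij(2)] ij(2) by (intro sum.mono_neutral_left) (auto simp: coeff_eq_0)
    also have "\<dots> = (V * T) $$ (i,j)"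
      using ij by (simp add: V_def T_def scalar_prod_def atLeast0LessThan mult.commute)
    finally show "mat n n (\<lambda>(i,j). poly (p j) (t i)) $$ (i,j) = (V * T) $$ (i,j)"
      using ij by simp
  qed (use V T in auto)
  ultimately show ?thesis
    using det_mult[OF V T] by (simp add: V_def)
qed

lemma det_vandermonde:
  fixes t :: "nat \<Rightarrow> 'a::comm_ring_1"
  shows "det (mat n n (\<lambda>(i,j). t i ^ j)) = (\<Prod>i<n. \<Prod>k<i. t i - t k)"
proof (induction n arbitrary: t)
  case 0
  show ?case by simp
next
  case (Suc n)
  define p where "p j = (if j = 0 then 1 else monom 1 j - monom (t 0) (j - 1))" for j
  have p_0: "p 0 = 1"
    by (simp add: p_def)
  have poly_p: "poly (p (Suc j)) x = (x - t 0) * x ^ j" for j x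
    by (simp add: p_def poly_monom algebra_simps)
  define B where "B = mat (Suc n) (Suc n) (\<lambda>(i,j). poly (p j) (t i))"
  have B: "B \<in> carrier_mat (Suc n) (Suc n)"
    by (simp add: B_def)
  have "det (mat (Suc n) (Suc n) (\<lambda>(i,j). t i ^ j)) = det B"
    unfolding B_def
    by (rule det_mat_poly_monic[symmetric])
      (auto simp: p_def coeff_monom intro!: degree_diff_le degree_monom_le order.trans[OF degree_monom_le])
  also have "\<dots> = (\<Sum>j<Suc n. B $$ (0,j) * cofactor B 0 j)"
    by (rule laplace_expansion_row[OF B]) simp
  also have "\<dots> = det (mat_delete B 0 0)"
    by (subst sum.lessThan_Suc_shift) (simp add: B_def p_0 poly_p cofactor_def)
  also have "mat_delete B 0 0 = mat n n (\<lambda>(i,j). (t (Suc i) - t 0) * t (Suc i) ^ j)"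
    by (rule eq_matI) (auto simp: mat_delete_def B_def poly_p)
  also have "det \<dots> = (\<Prod>i<n. t (Suc i) - t 0) * (\<Prod>i<n. \<Prod>k<i. t (Suc i) - t (Suc k))"
    by (simp add: det_mat_scale_rows Suc.IH)
  also have "\<dots> = (\<Prod>i<Suc n. \<Prod>k<i. t i - t k)"
    by (simp only: prod.lessThan_Suc_shift) (simp add: prod.distrib)
  finally show ?case .
qed

text \<open>cheb_U n is the Chebyshev polynomial of the second kind in the normalization U_n(t/2).\<close>

fun cheb_U :: "nat \<Rightarrow> 'a::comm_ring_1 poly" where
  "cheb_U 0 = 1"
| "cheb_U (Suc 0) = [:0, 1:]"
| "cheb_U (Suc (Suc n)) = pCons 0 (cheb_U (Suc n)) - cheb_U n"

lemma degree_cheb_U: "degree (cheb_U n) \<le> n"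
  by (induction n rule: cheb_U.induct) (auto intro!: degree_diff_le order.trans[OF degree_pCons_le])

lemma coeff_cheb_U_self: "coeff (cheb_U n) n = 1"
  by (induction n rule: cheb_U.induct) (auto simp: coeff_eq_0[OF le_less_trans[OF degree_cheb_U]])

lemma cheb_U_eval:
  fixes z w :: "'a::comm_ring_1"
  assumes "z * w = 1"
  shows "(z - w) * poly (cheb_U n) (z + w) = z ^ Suc n - w ^ Suc n"
proof (induction n rule: cheb_U.induct)
  case (3 n)
  have "(z - w) * poly (cheb_U (Suc (Suc n))) (z + w)
      = (z + w) * ((z - w) * poly (cheb_U (Suc n)) (z + w)) - (z - w) * poly (cheb_U n) (z + w)"
    by (simp add: algebra_simps)
  also have "\<dots> = (z + w) * (z ^ Suc (Suc n) - w ^ Suc (Suc n)) - (z ^ Suc n - w ^ Suc n)"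
    using 3 by simp
  also have "\<dots> = z ^ Suc (Suc (Suc n)) - w ^ Suc (Suc (Suc n)) + (z * w - 1) * (z ^ Suc n - w ^ Suc n)"
    by (simp add: algebra_simps)
  finally show ?case
    using assms by simp
qed (use assms in \<open>simp_all add: algebra_simps power2_eq_square\<close>)

lemma det_mat_power_diff:
  fixes z w :: "nat \<Rightarrow> 'a::comm_ring_1"
  assumes "\<And>i. z i * w i = 1"
  shows "det (mat n n (\<lambda>(i,j). z i ^ Suc j - w i ^ Suc j))
    = (\<Prod>i<n. z i - w i) * (\<Prod>i<n. \<Prod>k<i. (z i + w i) - (z k + w k))"
proof -
  have "mat n n (\<lambda>(i,j). z i ^ Suc j - w i ^ Suc j)
      = mat n n (\<lambda>(i,j). (z i - w i) * poly (cheb_U j) (z i + w i))"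
    by (rule cong_mat) (simp_all add: cheb_U_eval[OF assms])
  then show ?thesis
    by (simp add: det_mat_scale_rows det_vandermonde degree_cheb_U coeff_cheb_U_self
        det_mat_poly_monic[of n cheb_U "\<lambda>i. z i + w i"])
qed

lemma permutes_conj_Suc:
  assumes "p permutes {..<m}"
  shows "(\<lambda>x. if x \<in> {1..m} then Suc (p (x - 1)) else x) permutes {1..m}"
    and "sign (\<lambda>x. if x \<in> {1..m} then Suc (p (x - 1)) else x) = sign p"
proof -
  interpret permutes_bij_finite p "{..<m}" "{1..m}" Suc "\<lambda>x. x - 1"
    "\<lambda>x. if x \<in> {1..m} then Suc (p (x - 1)) else x"
    by unfold_locales (use assms in \<open>auto simp: image_Suc_lessThan\<close>)
  show "(\<lambda>x. if x \<in> {1..m} then Suc (p (x - 1)) else x) permutes {1..m}"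
    by (rule permutes_p')
  show "sign (\<lambda>x. if x \<in> {1..m} then Suc (p (x - 1)) else x) = sign p"
    by (rule sign_p')
qed

lemma permutes_conj_pred:
  assumes "p permutes {1..m}"
  shows "(\<lambda>x. if x \<in> {..<m} then p (Suc x) - 1 else x) permutes {..<m}"
proof -
  have "bij_betw (\<lambda>x. x - 1) {1..m} {..<m}"
    by (rule bij_betw_byWitness[where f' = Suc]) auto
  then interpret permutes_bij_finite p "{1..m}" "{..<m}" "\<lambda>x. x - 1" Suc
    "\<lambda>x. if x \<in> {..<m} then p (Suc x) - 1 else x"
    by unfold_locales (use assms in auto)
  show ?thesis
    by (rule permutes_p')
qed

lemma detm_eq_det: "detm m M = det (mat m m (\<lambda>(i,j). M (Suc i) (Suc j)))"
proof -
  define shift where "shift p = (\<lambda>x. if x \<in> {1..m} then Suc (p (x - 1)) else x)" for p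
  define unshift where "unshift p = (\<lambda>x. if x \<in> {..<m} then p (Suc x) - 1 else x)" for p
  have "bij_betw shift {p. p permutes {..<m}} {p. p permutes {1..m}}"
  proof (rule bij_betw_byWitness[where f' = unshift])
    show "\<forall>p \<in> {p. p permutes {..<m}}. unshift (shift p) = p"
      by (auto simp: shift_def unshift_def fun_eq_iff permutes_not_in)
    show "\<forall>p \<in> {p. p permutes {1..m}}. shift (unshift p) = p"
    proof (intro ballI ext)
      fix p x assume "p \<in> {p. p permutes {1..m}}"
      then have p: "p permutes {1..m}"
        by simp
      show "shift (unshift p) x = p x"
        using permutes_in_image[OF p, of x] permutes_not_in[OF p, of x]
        by (cases "x \<in> {1..m}") (auto simp: shift_def unshift_def)
    qed
    show "shift ` {p. p permutes {..<m}} \<subseteq> {p. p permutes {1..m}}"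
      using permutes_conj_Suc(1) by (auto simp: shift_def)
    show "unshift ` {p. p permutes {1..m}} \<subseteq> {p. p permutes {..<m}}"
      using permutes_conj_pred by (auto simp: unshift_def)
  qed
  then have "detm m M
      = (\<Sum>p | p permutes {..<m}. of_int (sign (shift p)) * (\<Prod>i=1..m. M i (shift p i)))"
    unfolding detm_def by (rule sum.reindex_bij_betw[symmetric])
  also have "\<dots> = (\<Sum>p | p permutes {..<m}. signof p * (\<Prod>i<m. M (Suc i) (Suc (p i))))"
  proof (intro sum.cong refl)
    fix p assume "p \<in> {p. p permutes {..<m}}"
    then have "sign (shift p) = sign p"
      using permutes_conj_Suc(2) by (simp add: shift_def)
    then show "of_int (sign (shift p)) * (\<Prod>i=1..m. M i (shift p i))
        = signof p * (\<Prod>i<m. M (Suc i) (Suc (p i)))"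
      by (simp add: shift_def prod.atLeast1_atMost_eq)
  qed
  also have "\<dots> = det (mat m m (\<lambda>(i,j). M (Suc i) (Suc j)))"
    by (subst det_def'[of _ m])
      (auto simp: atLeast0LessThan intro!: sum.cong prod.cong permutes_in_image)
  finally show ?thesis .
qed

lemma fls_X_intpow_of_nat: "fls_X_intpow (int k) = (fls_X ^ k :: lp)"
  and fls_X_intpow_uminus_of_nat: "fls_X_intpow (- int k) = inverse (fls_X ^ k :: lp)"
  by (simp_all only: fls_X_power_int[symmetric] power_int_minus power_int_of_nat)

lemma altC_ps_eq_prod:
  assumes "\<And>i. i < m \<Longrightarrow> mu (Suc i) = int (e i)"
  shows "altC_ps m mu
    = (\<Prod>i<m. fls_X ^ e i - inverse (fls_X ^ e i))
    * (\<Prod>i<m. \<Prod>k<i. (fls_X ^ e i + inverse (fls_X ^ e i)) - (fls_X ^ e k + inverse (fls_X ^ e k)))"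
proof -
  define z where "z i = (fls_X ^ e i :: lp)" for i
  have "altC_ps m mu = det (mat m m (\<lambda>(i,j). z i ^ Suc j - inverse (z i) ^ Suc j))"
    unfolding altC_ps_def detm_eq_det
  proof (intro arg_cong[where f = det] cong_mat refl)
    fix i j assume "i < m"
    then have "int (Suc j) * mu (Suc i) = int (e i * Suc j)"
      using assms by (simp add: algebra_simps)
    then show "(case (i, j) of (i, j) \<Rightarrow>
          fls_X_intpow (int (Suc j) * mu (Suc i)) - fls_X_intpow (- (int (Suc j) * mu (Suc i))))
        = (case (i, j) of (i, j) \<Rightarrow> z i ^ Suc j - inverse (z i) ^ Suc j)"
      by (simp only: case_prod_conv fls_X_intpow_of_nat fls_X_intpow_uminus_of_nat z_def
          power_mult power_inverse)
  qed
  also have "\<dots> = (\<Prod>i<m. z i - inverse (z i))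
      * (\<Prod>i<m. \<Prod>k<i. (z i + inverse (z i)) - (z k + inverse (z k)))"
    by (rule det_mat_power_diff) (simp add: z_def)
  finally show ?thesis
    by (simp only: z_def)
qed

lemma fls_X_minus_1_mult_qint: "(fls_X - 1) * qint k = fls_X ^ k - 1"
  unfolding qint_def by (rule power_diff_1_eq[symmetric])

lemma fls_X_power_minus_1_nonzero:
  assumes "0 < k"
  shows "(fls_X ^ k - 1 :: lp) \<noteq> 0"
proof
  assume "(fls_X ^ k - 1 :: lp) = 0"
  then have "fls_nth (fls_X ^ k - 1 :: lp) 0 = 0"
    by simp
  with assms show False
    by simp
qed

lemma fls_subdegree_fls_X_power_minus_1: "0 < k \<Longrightarrow> fls_subdegree (fls_X ^ k - 1 :: lp) = 0"
  by (rule fls_subdegree_eqI) auto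

lemma qint_nonzero: "0 < k \<Longrightarrow> qint k \<noteq> 0"
  using fls_X_minus_1_mult_qint[of k] fls_X_power_minus_1_nonzero[of k] by auto

lemma fls_subdegree_qint:
  assumes "0 < k"
  shows "fls_subdegree (qint k) = 0"
proof -
  have "fls_subdegree ((fls_X - 1) * qint k) = fls_subdegree (fls_X - 1 :: lp) + fls_subdegree (qint k)"
    using fls_X_power_minus_1_nonzero[of 1] qint_nonzero[OF assms]
    by (intro fls_subdegree_mult) simp_all
  then show ?thesis
    using fls_subdegree_fls_X_power_minus_1[OF assms] fls_subdegree_fls_X_power_minus_1[of 1]
    by (simp add: fls_X_minus_1_mult_qint)
qed

lemma qfact_nonzero: "qfact k \<noteq> 0"
  by (simp add: qfact_def qint_nonzero)

lemma fls_subdegree_qfact: "fls_subdegree (qfact k) = 0"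
  unfolding qfact_def by (subst fls_subdegree_prod) (auto simp: qint_nonzero fls_subdegree_qint)

lemma qfact_Suc: "qfact (Suc k) = qfact k * qint (Suc k)"
  unfolding qfact_def by (simp add: prod.nat_ivl_Suc' mult.commute)

lemma qfact_add: "qfact (n + k) = qfact n * (\<Prod>a<k. qint (n + Suc a))"
  by (induction k) (auto simp: qfact_Suc)

lemma qCat_conv_qfact: "qCat k = qfact (2 * k) / (qfact k * qfact (Suc k))"
  by (simp add: qCat_def qbinom_def qfact_Suc mult_2)

lemma qCat_nonzero: "qCat k \<noteq> 0"
  by (simp add: qCat_conv_qfact qfact_nonzero)

lemma fls_subdegree_qCat: "fls_subdegree (qCat k) = 0"
  by (simp add: qCat_conv_qfact qfact_nonzero fls_divide_subdegree fls_subdegree_mult fls_subdegree_qfact)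

lemma qCat_Suc_0: "qCat (Suc 0) = 1"
  using qint_nonzero[of 2] by (simp add: qCat_conv_qfact qfact_def qint_def numeral_2_eq_2)

lemma fls_X_power_minus_inverse:
  "fls_X ^ a - inverse (fls_X ^ a) = (fls_X - 1) * qint (2 * a) / (fls_X ^ a :: lp)"
  unfolding fls_X_minus_1_mult_qint by (rule power_minus_inverse_eq) simp

lemma fls_X_power_plus_inverse_diff:
  assumes "a < b"
  shows "(fls_X ^ a + inverse (fls_X ^ a)) - (fls_X ^ b + inverse (fls_X ^ b))
    = - ((fls_X - 1) ^ 2 * qint (b - a) * qint (a + b)) / (fls_X ^ b :: lp)"
proof -
  obtain d where b: "b = a + d"
    using assms less_imp_add_positive by blast
  have numerator: "(fls_X - 1) ^ 2 * qint (b - a) * qint (a + b)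
      = (fls_X ^ d - 1) * (fls_X ^ (a + (a + d)) - 1 :: lp)"
    unfolding b fls_X_minus_1_mult_qint[symmetric] by (simp add: power2_eq_square mult_ac)
  show ?thesis
    unfolding numerator unfolding b by (rule power_plus_inverse_diff_eq) simp
qed

text \<open>Ordering the rows of the alternant of rho + c omega by increasing exponent, row b has
  exponent b + 1 + c; altC_row c b collects its factor from the diagonal product and its
  Vandermonde factors against all rows of smaller exponent.\<close>

definition altC_row :: "nat \<Rightarrow> nat \<Rightarrow> lp" where
  "altC_row c b = (fls_X ^ (Suc b + c) - inverse (fls_X ^ (Suc b + c)))
    * (\<Prod>a<b. (fls_X ^ (Suc a + c) + inverse (fls_X ^ (Suc a + c)))
             - (fls_X ^ (Suc b + c) + inverse (fls_X ^ (Suc b + c))))"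

lemma altC_ps_rho_shift:
  assumes "\<And>i. 1 \<le> i \<Longrightarrow> i \<le> m \<Longrightarrow> mu i = int (m - i + 1 + c)"
  shows "altC_ps m mu = (\<Prod>b<m. altC_row c b)"
proof -
  define F where "F e = (fls_X ^ (e + c) - inverse (fls_X ^ (e + c)) :: lp)" for e
  define T where "T e = (fls_X ^ (e + c) + inverse (fls_X ^ (e + c)) :: lp)" for e
  have "altC_ps m mu = (\<Prod>i<m. F (m - i)) * (\<Prod>i<m. \<Prod>k<i. T (m - i) - T (m - k))"
    unfolding F_def T_def using assms by (intro altC_ps_eq_prod) simp
  also have "\<dots> = (\<Prod>b<m. F (Suc b)) * (\<Prod>b<m. \<Prod>a<b. T (Suc a) - T (Suc b))"
    by (simp only: prod_lessThan_reflect prod_lessThan_triangle_reflect[where h = "\<lambda>x y. T x - T y"])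
  also have "\<dots> = (\<Prod>b<m. altC_row c b)"
    by (simp add: altC_row_def F_def T_def prod.distrib)
  finally show ?thesis .
qed

lemma altC_row_closed_form:
  "altC_row c b = (- 1) ^ b * (fls_X - 1) ^ (2 * b + 1) * qfact b * qfact (2 * (Suc b + c))
    / (qfact (Suc b + 2 * c) * fls_X ^ ((Suc b + c) * Suc b))"
proof -
  define e where "e = Suc b + c"
  have "(\<Prod>a<b. (fls_X ^ (Suc a + c) + inverse (fls_X ^ (Suc a + c))) - (fls_X ^ e + inverse (fls_X ^ e)))
      = (\<Prod>a<b. - 1 * (fls_X - 1) ^ 2 * qint (b - a) * qint (Suc b + 2 * c + Suc a)
          / fls_X ^ e)"
  proof (intro prod.cong refl)
    fix a assume "a \<in> {..<b}"
    then have lt: "Suc a + c < e" and diff: "e - (Suc a + c) = b - a"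
      and sum: "Suc a + c + e = Suc b + 2 * c + Suc a"
      by (auto simp: e_def)
    show "(fls_X ^ (Suc a + c) + inverse (fls_X ^ (Suc a + c))) - (fls_X ^ e + inverse (fls_X ^ e))
        = - 1 * (fls_X - 1) ^ 2 * qint (b - a) * qint (Suc b + 2 * c + Suc a) / fls_X ^ e"
      unfolding fls_X_power_plus_inverse_diff[OF lt] diff sum by simp
  qed
  also have "\<dots> = (- 1) ^ b * (fls_X - 1) ^ (2 * b) * (\<Prod>a<b. qint (b - a))
      * (\<Prod>a<b. qint (Suc b + 2 * c + Suc a)) / fls_X ^ (e * b)"
    by (simp only: prod_dividef prod.distrib prod_constant card_lessThan power_mult)
  also have "(\<Prod>a<b. qint (b - a)) = qfact b"
    by (simp add: qfact_def prod_lessThan_reflect prod.atLeast1_atMost_eq)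
  finally have row_prod:
    "(\<Prod>a<b. (fls_X ^ (Suc a + c) + inverse (fls_X ^ (Suc a + c))) - (fls_X ^ e + inverse (fls_X ^ e)))
      = (- 1) ^ b * (fls_X - 1) ^ (2 * b) * qfact b * (\<Prod>a<b. qint (Suc b + 2 * c + Suc a))
        / fls_X ^ (e * b)" .
  have row: "altC_row c b = (fls_X - 1) * qint (2 * e) / fls_X ^ e
      * ((- 1) ^ b * (fls_X - 1) ^ (2 * b) * qfact b * (\<Prod>a<b. qint (Suc b + 2 * c + Suc a))
        / fls_X ^ (e * b))"
    unfolding altC_row_def e_def[symmetric] fls_X_power_minus_inverse row_prod ..
  have qfact_2e:
    "qfact (2 * e) = qfact (Suc b + 2 * c) * (\<Prod>a<b. qint (Suc b + 2 * c + Suc a)) * qint (2 * e)"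
    using qfact_add[of "Suc b + 2 * c" "Suc b"] by (simp add: e_def mult_ac)
  have X_power: "fls_X ^ (e * Suc b) = fls_X ^ e * (fls_X ^ (e * b) :: lp)"
    by (simp add: power_add)
  show ?thesis
    unfolding e_def[symmetric] row qfact_2e X_power
    by (simp add: field_simps qfact_nonzero del: fls_divide_X_power)
qed

lemma altC_row_ratio:
  "altC_row 1 b / altC_row 0 b = qCat (Suc (Suc b)) / (qCat (Suc b) * fls_X ^ Suc b)"
proof -
  have "fls_X ^ ((Suc b + 1) * Suc b) = fls_X ^ Suc b * (fls_X ^ ((Suc b + 0) * Suc b) :: lp)"
    by (simp add: power_add)
  then show ?thesis
    using fls_X_power_minus_1_nonzero[of 1]
    unfolding altC_row_closed_form qCat_conv_qfact
    by (simp add: field_simps qfact_nonzero del: fls_divide_X_power)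
qed

lemma psC_omegaC: "fls_X ^ (Suc m choose 2) * psC m (omegaC m) = qCat (Suc m)"
proof -
  have "altC_ps m (\<lambda>i. omegaC m i + rhoC m i) = (\<Prod>b<m. altC_row 1 b)"
    by (rule altC_ps_rho_shift) (simp add: omegaC_def rhoC_def)
  moreover have "altC_ps m (rhoC m) = (\<Prod>b<m. altC_row 0 b)"
    by (rule altC_ps_rho_shift) (simp add: rhoC_def)
  ultimately have "psC m (omegaC m) = (\<Prod>b<m. altC_row 1 b / altC_row 0 b)"
    by (simp add: psC_def prod_dividef)
  also have "\<dots> = (\<Prod>b<m. qCat (Suc (Suc b)) / qCat (Suc b)) / (\<Prod>b<m. fls_X ^ Suc b)"
    by (simp only: altC_row_ratio prod_dividef prod.distrib divide_divide_eq_left)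
  also have "(\<Prod>b<m. qCat (Suc (Suc b)) / qCat (Suc b)) = qCat (Suc m)"
    using prod_lessThan_telescope[of m "\<lambda>i. qCat (Suc i)"] by (simp add: qCat_nonzero qCat_Suc_0)
  also have "(\<Prod>b<m. fls_X ^ Suc b) = fls_X ^ (Suc m choose 2)"
    by (rule prod_power_Suc_eq_power_choose_2)
  finally show ?thesis
    by (simp del: fls_divide_X_power)
qed

theorem theorem5p2:
  fixes n :: nat
  assumes "n \<ge> 2"
  shows "npsC (n - 1) (omegaC (n - 1)) = fls_X ^ (n choose 2) * psC (n - 1) (omegaC (n - 1))
       \<and> fls_X ^ (n choose 2) * psC (n - 1) (omegaC (n - 1)) = qCat n"
proof -
  obtain m where n: "n = Suc m"
    using assms by (cases n) auto
  define ps where "ps = psC m (omegaC m)"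
  have main: "fls_X ^ (n choose 2) * ps = qCat n"
    unfolding n ps_def by (rule psC_omegaC)
  then have "ps \<noteq> 0"
    using qCat_nonzero by auto
  then have "fls_subdegree ps = - int (n choose 2)"
    using fls_subdegree_mult_fls_X_power(1)[of ps "n choose 2"] by (simp add: main fls_subdegree_qCat)
  then have "npsC m (omegaC m) = fls_X ^ (n choose 2) * ps"
    by (simp add: npsC_def flip: ps_def add: fls_X_power_times_conv_shift(1))
  with main show ?thesis
    by (simp add: n ps_def)
qed

end
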